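(* Let $m,n\ge1$, $\mathcal{H}=\mathbb{R}^{m\times n}$ with $\langle\mathbf{A},\mathbf{B}\rangle_{\mathcal{H}}=\mathbf{A}^\intercal\mathbf{B}$, and let $\mathbf{V}\in\mathbb{R}^{n\times n}$ be a nonzero symmetric matrix such that $\langle\langle\mathbf{X},\mathbf{X}\rangle_{\mathcal{H}},\mathbf{V}/\|\mathbf{V}\|\rangle\ge0$ for all $\mathbf{X}\in\mathcal{H}$; set $\|\mathbf{X}\|_{\mathcal{H}}(\mathbf{V})=\big(\langle\langle\mathbf{X},\mathbf{X}\rangle_{\mathcal{H}},\mathbf{V}/\|\mathbf{V}\|\rangle\big)^{1/2}$. Let $\mathcal{S}=(\mathbf{X}_1,\dots,\mathbf{X}_N)$ be a finite sequence of matrices in $\mathcal{H}$ and define $$\mathcal{H}\circ\mathcal{S}=\Big\{\Big(\big\langle\langle\mathbf{W},\mathbf{X}_1\rangle_{\mathcal{H}},\tfrac{\mathbf{V}}{\|\mathbf{V}\|}\big\rangle,\dots,\big\langle\langle\mathbf{W},\mathbf{X}_N\rangle_{\mathcal{H}},\tfrac{\mathbf{V}}{\|\mathbf{V}\|}\big\rangle\Big):\ \|\mathbf{W}\|_{\mathcal{H}}(\mathbf{V})\le1\Big\}\subseteq\mathbb{R}^N.$$ Then $R(\mathcal{H}\circ\mathcal{S})\le\dfrac{\max_i\|\mathbf{X}_i\|_{\mathcal{H}}(\mathbf{V})}{\sqrt N}$.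
   Context: $\langle\cdot,\cdot\rangle$ is the Frobenius inner product and $\|\cdot\|$ the Frobenius norm. For $\mathcal{A}\subseteq\mathbb{R}^N$, the Rademacher complexity is $R(\mathcal{A})=\frac1N\mathbb{E}_{\bm\sigma}\big[\sup_{\mathbf{a}\in\mathcal{A}}\sum_{i=1}^N\sigma_ia_i\big]$, where $\sigma_1,\dots,\sigma_N$ are i.i.d. uniform on $\{\pm1\}$. *)

theory Defs
  imports "HOL-Analysis.Analysis"
begin

text \<open>Matrices are rendered as real^'n^'m (m x n). The Frobenius inner product of
  two matrices is the library inner product on real^'n^'n (sum of entrywise
  products), and the Frobenius norm is the library norm.\<close>

definition hinner :: "real^'n^'m \<Rightarrow> real^'n^'m \<Rightarrow> real^'n^'n" where
  "hinner A B = transpose A ** B"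

definition vpair :: "real^'n^'n \<Rightarrow> real^'n^'m \<Rightarrow> real^'n^'m \<Rightarrow> real" where
  "vpair V A B = hinner A B \<bullet> ((1 / norm V) *\<^sub>R V)"

definition hnorm :: "real^'n^'n \<Rightarrow> real^'n^'m \<Rightarrow> real" where
  "hnorm V X = sqrt (vpair V X X)"

text \<open>Rademacher complexity of A (vectors in R^N represented as nat => real, only
  indices < N matter): (1/N) E_sigma sup_{a in A} sum_i sigma_i a_i, with sigma
  uniform on {-1,1}^N, so the expectation is the average over all 2^N sign vectors.\<close>
definition rademacher :: "nat \<Rightarrow> (nat \<Rightarrow> real) set \<Rightarrow> real" where
  "rademacher N A =
     (1 / real N) * ((\<Sum>\<sigma>\<in>({..<N} \<rightarrow>\<^sub>E {-1, 1}). Sup ((\<lambda>a. \<Sum>i<N. \<sigma> i * a i) ` A)) / 2 ^ N)"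

end

theory Submission
  imports Defs
begin

text \<open>For a symmetric positive semidefinite bilinear form B and w in its unit ball,
  Cauchy-Schwarz gives \<open>\<Sum>i \<sigma>\<^sub>i B w X\<^sub>i = B w (\<Sum>i \<sigma>\<^sub>i X\<^sub>i) \<le> \<surd>(B s s)\<close> with \<open>s = \<Sum>i \<sigma>\<^sub>i X\<^sub>i\<close>.
  Averaging over the signs and using concavity of the square root, the expectation of
  \<open>\<surd>(B s s)\<close> is at most the square root of the expectation of \<open>B s s\<close>, which is
  \<open>\<Sum>i B X\<^sub>i X\<^sub>i\<close> because distinct Rademacher signs are orthogonal. The last sum is at most
  N times the square of the largest norm.\<close>

lemma sum_sqrt_le_sqrt_card_mult_sum:
  assumes "\<And>x. x \<in> A \<Longrightarrow> f x \<ge> 0"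
  shows "(\<Sum>x\<in>A. sqrt (f x)) \<le> sqrt (real (card A) * (\<Sum>x\<in>A. f x))"
proof (rule real_le_rsqrt)
  have "(\<Sum>x\<in>A. sqrt (f x))\<^sup>2 \<le> (\<Sum>x\<in>A. (sqrt (f x))\<^sup>2) * card A"
    by (rule sum_squared_le_sum_of_squares)
  also have "\<dots> = real (card A) * (\<Sum>x\<in>A. f x)"
    using assms by simp
  finally show "(\<Sum>x\<in>A. sqrt (f x))\<^sup>2 \<le> real (card A) * (\<Sum>x\<in>A. f x)" .
qed

lemma sum_sign_vectors_mult:
  assumes "i < N" "j < N"
  shows "(\<Sum>\<sigma>\<in>{..<N} \<rightarrow>\<^sub>E {-1, 1::real}. \<sigma> i * \<sigma> j) = (if i = j then 2 ^ N else 0)"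
proof (cases "i = j")
  case True
  then have "(\<Sum>\<sigma>\<in>{..<N} \<rightarrow>\<^sub>E {-1, 1::real}. \<sigma> i * \<sigma> j) = (\<Sum>\<sigma>\<in>{..<N} \<rightarrow>\<^sub>E {-1, 1::real}. 1)"
    using assms by (intro sum.cong) (auto simp: PiE_def Pi_def)
  with True show ?thesis
    by (simp add: card_PiE numeral_2_eq_2)
next
  case False
  define P where "P = {..<N} \<rightarrow>\<^sub>E {-1, 1::real}"
  define flip where "flip \<sigma> = \<sigma>(i := - \<sigma> i)" for \<sigma> :: "nat \<Rightarrow> real"
  have "(\<Sum>\<sigma>\<in>P. \<sigma> i * \<sigma> j) = (\<Sum>\<sigma>\<in>P. - (\<sigma> i * \<sigma> j))"
    using assms False
    by (intro sum.reindex_bij_witness[of P flip flip])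
       (auto simp: P_def flip_def PiE_def Pi_def extensional_def)
  then have "(\<Sum>\<sigma>\<in>P. \<sigma> i * \<sigma> j) = 0"
    by (simp add: sum_negf)
  with False show ?thesis
    by (simp add: P_def)
qed

lemma sum_sign_vectors_bilinear:
  fixes B :: "'a::real_vector \<Rightarrow> 'a \<Rightarrow> real"
  assumes "bilinear B"
  shows "(\<Sum>\<sigma>\<in>{..<N} \<rightarrow>\<^sub>E {-1, 1}. B (\<Sum>i<N. \<sigma> i *\<^sub>R x i) (\<Sum>i<N. \<sigma> i *\<^sub>R x i))
           = 2 ^ N * (\<Sum>i<N. B (x i) (x i))"
proof -
  define P where "P = {..<N} \<rightarrow>\<^sub>E {-1, 1::real}"
  have "(\<Sum>\<sigma>\<in>P. B (\<Sum>i<N. \<sigma> i *\<^sub>R x i) (\<Sum>i<N. \<sigma> i *\<^sub>R x i))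
      = (\<Sum>\<sigma>\<in>P. \<Sum>i<N. \<Sum>j<N. \<sigma> i * \<sigma> j * B (x i) (x j))"
    by (simp add: bilinear_sum[OF assms] bilinear_lmul[OF assms] bilinear_rmul[OF assms]
        mult.assoc mult.left_commute flip: sum.cartesian_product)
  also have "\<dots> = (\<Sum>i<N. \<Sum>\<sigma>\<in>P. \<Sum>j<N. \<sigma> i * \<sigma> j * B (x i) (x j))"
    by (rule sum.swap)
  also have "\<dots> = (\<Sum>i<N. \<Sum>j<N. \<Sum>\<sigma>\<in>P. \<sigma> i * \<sigma> j * B (x i) (x j))"
    by (intro sum.cong refl) (rule sum.swap)
  also have "\<dots> = (\<Sum>i<N. \<Sum>j<N. (\<Sum>\<sigma>\<in>P. \<sigma> i * \<sigma> j) * B (x i) (x j))"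
    by (simp add: sum_distrib_right)
  also have "\<dots> = (\<Sum>i<N. \<Sum>j<N. if i = j then 2 ^ N * B (x i) (x j) else 0)"
    by (intro sum.cong refl) (simp add: P_def sum_sign_vectors_mult)
  also have "\<dots> = 2 ^ N * (\<Sum>i<N. B (x i) (x i))"
    by (simp add: sum_distrib_left)
  finally show ?thesis
    by (simp add: P_def)
qed

locale psd_bilinear_form =
  fixes B :: "'a::real_vector \<Rightarrow> 'a \<Rightarrow> real"
  assumes bilinear: "bilinear B"
    and commute: "B y x = B x y"
    and nonneg: "B x x \<ge> 0"
begin

lemma quadratic_expansion: "B (t *\<^sub>R w - x) (t *\<^sub>R w - x) = t\<^sup>2 * B w w - 2 * t * B w x + B x x"
proof -
  have "B (t *\<^sub>R w - x) (t *\<^sub>R w - x) = t * (t * B w w) - t * B w x - t * B x w + B x x"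
    by (simp add: bilinear_lsub[OF bilinear] bilinear_rsub[OF bilinear] bilinear_lmul[OF bilinear]
        bilinear_rmul[OF bilinear] right_diff_distrib)
  then show ?thesis
    by (simp add: commute[of x w] power2_eq_square)
qed

lemma cauchy_schwarz_unit_ball:
  assumes "B w w \<le> 1"
  shows "B w x \<le> sqrt (B x x)"
proof -
  have quadratic: "2 * t * B w x \<le> t\<^sup>2 + B x x" if "t > 0" for t
  proof -
    have "0 \<le> t\<^sup>2 * B w w - 2 * t * B w x + B x x"
      using nonneg[of "t *\<^sub>R w - x"] by (simp only: quadratic_expansion)
    moreover have "t\<^sup>2 * B w w \<le> t\<^sup>2"
      using assms by (simp add: mult_left_le)
    ultimately show ?thesis by linarith
  qed
  show ?thesis
  proof (cases "B x x = 0")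
    case True
    show ?thesis
    proof (rule ccontr)
      assume "\<not> ?thesis"
      then have "B w x > 0" using True by simp
      then show False
        using quadratic[of "B w x"] True by (simp add: power2_eq_square)
    qed
  next
    case False
    then have "sqrt (B x x) > 0" using nonneg[of x] by simp
    moreover have "sqrt (B x x) * B w x \<le> sqrt (B x x) * sqrt (B x x)"
      using quadratic[of "sqrt (B x x)"] calculation nonneg[of x] by simp
    ultimately show ?thesis
      by (metis mult_left_le_imp_le)
  qed
qed

lemma rademacher_unit_ball_le:
  "rademacher N {(\<lambda>i. B w (x i)) | w. B w w \<le> 1} \<le> sqrt (\<Sum>i<N. B (x i) (x i)) / real N"
proof -
  define P where "P = {..<N} \<rightarrow>\<^sub>E {-1, 1::real}"
  define F where "F = {(\<lambda>i. B w (x i)) | w. B w w \<le> 1}"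
  define s where "s \<sigma> = (\<Sum>i<N. \<sigma> i *\<^sub>R x i)" for \<sigma>
  define sup_F where "sup_F \<sigma> = Sup ((\<lambda>a. \<Sum>i<N. \<sigma> i * a i) ` F)" for \<sigma>
  have pair_s: "B w (s \<sigma>) = (\<Sum>i<N. \<sigma> i * B w (x i))" for w \<sigma>
  proof -
    have "linear (B w)" using bilinear by (simp add: bilinear_def)
    then show ?thesis by (simp add: s_def linear_sum linear_scale)
  qed
  have sup_F_le: "sup_F \<sigma> \<le> sqrt (B (s \<sigma>) (s \<sigma>))" for \<sigma>
    unfolding sup_F_def
  proof (rule cSup_least)
    have "(\<lambda>i. B 0 (x i)) \<in> F"
      using bilinear_lzero[OF bilinear] unfolding F_def by force
    then show "(\<lambda>a. \<Sum>i<N. \<sigma> i * a i) ` F \<noteq> {}"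
      by blast
  next
    fix y assume "y \<in> (\<lambda>a. \<Sum>i<N. \<sigma> i * a i) ` F"
    then obtain w where "B w w \<le> 1" "y = B w (s \<sigma>)"
      by (auto simp: F_def pair_s)
    then show "y \<le> sqrt (B (s \<sigma>) (s \<sigma>))"
      using cauchy_schwarz_unit_ball by simp
  qed
  have "(\<Sum>\<sigma>\<in>P. sup_F \<sigma>) \<le> (\<Sum>\<sigma>\<in>P. sqrt (B (s \<sigma>) (s \<sigma>)))"
    by (intro sum_mono sup_F_le)
  also have "\<dots> \<le> sqrt (real (card P) * (\<Sum>\<sigma>\<in>P. B (s \<sigma>) (s \<sigma>)))"
    by (intro sum_sqrt_le_sqrt_card_mult_sum nonneg)
  also have "\<dots> = 2 ^ N * sqrt (\<Sum>i<N. B (x i) (x i))"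
    by (simp add: P_def s_def card_PiE sum_sign_vectors_bilinear[OF bilinear] real_sqrt_mult
        numeral_2_eq_2 flip: power_mult_distrib)
  finally have "1 / real N * ((\<Sum>\<sigma>\<in>P. sup_F \<sigma>) / 2 ^ N) \<le> 1 / real N * sqrt (\<Sum>i<N. B (x i) (x i))"
    by (intro mult_left_mono) (simp_all add: pos_divide_le_eq mult.commute)
  then show ?thesis
    by (simp add: rademacher_def F_def P_def sup_F_def)
qed

end

lemma bilinear_hinner: "bilinear hinner"
  unfolding bilinear_def
  by (auto intro!: linearI simp: hinner_def matrix_matrix_mult_def transpose_def vec_eq_iff
      sum.distrib sum_distrib_left algebra_simps)

lemma bilinear_vpair: "bilinear (vpair V)"
  unfolding bilinear_def vpair_def
  by (auto intro!: linearI simp: bilinear_ladd[OF bilinear_hinner] bilinear_radd[OF bilinear_hinner]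
      bilinear_lmul[OF bilinear_hinner] bilinear_rmul[OF bilinear_hinner] inner_add_left add_divide_distrib)

lemma inner_transpose_left:
  fixes A :: "real^'n^'m"
  shows "transpose A \<bullet> B = A \<bullet> transpose B"
  unfolding inner_vec_def transpose_def by (simp, subst sum.swap) (simp add: mult.commute)

lemma vpair_commute:
  assumes "transpose V = V"
  shows "vpair V B A = vpair V A B"
  unfolding vpair_def hinner_def
  by (metis assms inner_transpose_left matrix_transpose_mul transpose_scalar transpose_transpose)

lemma psd_bilinear_form_vpair:
  assumes "transpose V = V" and "\<forall>Y :: real^'n^'m. vpair V Y Y \<ge> 0"
  shows "psd_bilinear_form (vpair V :: real^'n^'m \<Rightarrow> _)"
  using bilinear_vpair vpair_commute[OF assms(1)] assms(2) by unfold_locales auto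

lemma sqrt_sum_squares_div_le_Max:
  fixes f :: "nat \<Rightarrow> real"
  assumes "N \<ge> 1" and "\<And>i. f i \<ge> 0"
  shows "sqrt (\<Sum>i<N. (f i)\<^sup>2) / real N \<le> (MAX i\<in>{..<N}. f i) / sqrt (real N)"
proof -
  define M where "M = (MAX i\<in>{..<N}. f i)"
  have le_M: "f i \<le> M" if "i < N" for i
    using that by (simp add: M_def)
  have "M \<ge> 0"
    using assms(1) assms(2)[of 0] le_M[of 0] by linarith
  have "(\<Sum>i<N. (f i)\<^sup>2) \<le> (\<Sum>i<N. M\<^sup>2)"
    using assms(2) le_M by (intro sum_mono power_mono) auto
  then have "sqrt (\<Sum>i<N. (f i)\<^sup>2) \<le> sqrt (real N * M\<^sup>2)"
    by (simp add: real_sqrt_le_mono)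
  also have "\<dots> = sqrt (real N) * M"
    using \<open>M \<ge> 0\<close> by (simp add: real_sqrt_mult)
  finally have "sqrt (\<Sum>i<N. (f i)\<^sup>2) / real N \<le> sqrt (real N) * M / real N"
    by (simp add: divide_right_mono)
  also have "\<dots> = M / sqrt (real N)"
    using assms(1) by (simp add: field_simps)
  finally show ?thesis
    by (simp add: M_def)
qed

theorem lemma3:
  fixes V :: "real^'n^'n" and X :: "nat \<Rightarrow> real^'n^'m" and N :: nat
  assumes "N \<ge> 1"
    and "V \<noteq> 0"
    and "transpose V = V"
    and "\<forall>Y :: real^'n^'m. vpair V Y Y \<ge> 0"
  shows "rademacher N {(\<lambda>i. vpair V W (X i)) | W. hnorm V W \<le> 1}
           \<le> (MAX i\<in>{..<N}. hnorm V (X i)) / sqrt (real N)"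
proof -
  interpret psd_bilinear_form "vpair V :: real^'n^'m \<Rightarrow> _"
    using assms(3,4) by (rule psd_bilinear_form_vpair)
  have hnorm_sq: "(hnorm V Y)\<^sup>2 = vpair V Y Y" for Y :: "real^'n^'m"
    by (simp add: hnorm_def nonneg)
  have "rademacher N {(\<lambda>i. vpair V W (X i)) | W. hnorm V W \<le> 1}
      = rademacher N {(\<lambda>i. vpair V W (X i)) | W. vpair V W W \<le> 1}"
    by (simp add: hnorm_def)
  also have "\<dots> \<le> sqrt (\<Sum>i<N. (hnorm V (X i))\<^sup>2) / real N"
    unfolding hnorm_sq by (rule rademacher_unit_ball_le)
  also have "\<dots> \<le> (MAX i\<in>{..<N}. hnorm V (X i)) / sqrt (real N)"
    using assms(1) by (rule sqrt_sum_squares_div_le_Max) (simp add: hnorm_def nonneg)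
  finally show ?thesis .
qed

end
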